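(* Let $d\ge 2$ be even and fix a base $\theta>1$. Let $(u_j)_{j\ge 1}$ be a real sequence and let ${\bm v}\in\mathbb{R}^d$ with $\|{\bm v}\|_2=1$. For each $n\ge 1$ let $\boldsymbol{u}_n=(u_1,\dots,u_n)^\top\in\mathbb{R}^n$ and $\boldsymbol{X}_n=\boldsymbol{u}_n{\bm v}^\top\in\mathbb{R}^{n\times d}$. Assume: (i) there exist constants $0<c\le C<\infty$ with $c\le |u_j|\le C$ for all $j$; (ii) $\sum_{j=1}^{n-1}|u_{j+1}^2-u_j^2| = o(n)$ as $n\to\infty$; (iii) (non-resonance of frequencies) $e^{2i\theta_k}\neq 1$ for all $1\le k\le d/2$, and $e^{i(\theta_k+\theta_l)}\neq 1$, $e^{i(\theta_k-\theta_l)}\neq 1$ for all $k\neq l$ (the paper justifies this by the $\theta_k$ and $(\theta_k\pm\theta_l)/2$ being irrational multiples of $\pi$). Then, as $n\to\infty$, $$\frac{\|\mathcal{R}(\boldsymbol{X}_n)\|_2}{\|\boldsymbol{X}_n\|_2}=\frac{1}{\sqrt 2}\max_{1\le k\le d/2}\alpha_k+o(1),$$ where $\alpha_k:=\sqrt{v_{2k-1}^2+v_{2k}^2}$, and moreover $\max_k\alpha_k\in[\sqrt{2/d},\,1]$.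
   Context: RoPE action: for $\boldsymbol{X}=[\boldsymbol{x}_1,\dots,\boldsymbol{x}_n]^\top\in\mathbb{R}^{n\times d}$ ($d$ even), $\mathcal{R}(\boldsymbol{X}):=[\boldsymbol{R}_1\boldsymbol{x}_1,\dots,\boldsymbol{R}_n\boldsymbol{x}_n]^\top$, where $\boldsymbol{R}_j=\mathrm{Diag}(\boldsymbol{R}_{j,\theta_1},\dots,\boldsymbol{R}_{j,\theta_{d/2}})\in\mathbb{R}^{d\times d}$ is block diagonal with $2\times2$ blocks $\boldsymbol{R}_{j,\theta_k}=\begin{bmatrix}\cos(j\theta_k)&-\sin(j\theta_k)\\ \sin(j\theta_k)&\cos(j\theta_k)\end{bmatrix}$ and frequencies $\theta_k=\theta^{-2(k-1)/d}$, $1\le k\le d/2$, for a base $\theta>1$. The $k$-th rotation plane of a vector ${\bm v}$ is the subvector $(v_{2k-1},v_{2k})$. $\|\cdot\|_2$ denotes the Euclidean norm of a vector and the spectral norm (largest singular value) of a matrix. *)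

theory Defs
  imports "HOL-Analysis.Analysis" "HOL-Library.Landau_Symbols"
begin

text \<open>Matrices of size n x d are represented as functions nat => nat => real,
  with 1-based indices i in {1..n}, j in {1..d}; vectors in R^d as nat => real
  with indices {1..d}.\<close>

definition rope_freq :: "real \<Rightarrow> nat \<Rightarrow> nat \<Rightarrow> real" where
  "rope_freq \<theta> d k = \<theta> powr (- 2 * (real k - 1) / real d)"

text \<open>RoPE action: row i is multiplied by the block diagonal rotation R_i.
  Coordinate j lies in rotation plane k = (j+1) div 2, i.e. the pair (2k-1, 2k).\<close>
definition rope :: "real \<Rightarrow> nat \<Rightarrow> (nat \<Rightarrow> nat \<Rightarrow> real) \<Rightarrow> nat \<Rightarrow> nat \<Rightarrow> real" where
  "rope \<theta> d X i j =
     (let k = (j + 1) div 2; a = real i * rope_freq \<theta> d k in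
      if odd j then cos a * X i j - sin a * X i (j + 1)
      else sin a * X i (j - 1) + cos a * X i j)"

definition spec_norm :: "nat \<Rightarrow> nat \<Rightarrow> (nat \<Rightarrow> nat \<Rightarrow> real) \<Rightarrow> real" where
  "spec_norm n d A = Sup {sqrt (\<Sum>i=1..n. (\<Sum>j=1..d. A i j * x j)\<^sup>2) | x.
                          (\<Sum>j=1..d. (x j)\<^sup>2) = 1}"

definition plane_norm :: "(nat \<Rightarrow> real) \<Rightarrow> nat \<Rightarrow> real" where
  "plane_norm v k = sqrt ((v (2*k - 1))\<^sup>2 + (v (2*k))\<^sup>2)"

end

theory Submission
  imports Defs
begin

text \<open>Encode the k-th rotation plane of a vector x as the complex number x_(2k-1) + i x_(2k).
  Then RoPE multiplies plane k of row j by cis (j theta_k), and for X = u v^T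
  ||R(X) x||^2 = sum_j u_j^2 (sum_k Re (cis (-j theta_k) zeta_k))^2  with  zeta_k = cnj v_k * x_k.
  Expanding the square, the diagonal terms contribute (sum_j u_j^2)/2 * sum_k alpha_k^2 |x_k|^2, and
  every other term is a weighted exponential sum sum_j u_j^2 e^(i j omega) at a frequency
  omega = theta_k + theta_l, or theta_k - theta_l with k ~= l, where e^(i omega) ~= 1.
  Abel summation bounds such a sum by 2 C^2 plus the total variation of u^2, which is o(n),
  while sum_j u_j^2 >= c^2 n. So, uniformly on the unit sphere,
  ||R(X_n) x||^2 / ||X_n||^2 = (1/2) sum_k alpha_k^2 |x_k|^2 + o(1), whose maximum is
  (1/2) max_k alpha_k^2; and ||X_n||^2 = sum_j u_j^2 because X_n has rank one.\<close>

lemma sum_double_pairs: "(\<Sum>j=1..2*m. f j) = (\<Sum>k=1..m. f (2*k-1) + f (2*k))" for m :: nat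
proof (induction m)
  case (Suc m)
  have "{1..2 * Suc m} = insert (2*m+2) (insert (2*m+1) {1..2*m})" by auto
  then show ?case using Suc by (simp add: ac_simps)
qed simp

lemma sum_mult_power_Abel:
  fixes f :: "nat \<Rightarrow> 'a::comm_ring_1"
  assumes "n \<ge> 1"
  shows "(1 - z) * (\<Sum>j=1..n. f j * z^j) =
    f 1 * z - f n * z^(n+1) + (\<Sum>j=1..n-1. (f (j+1) - f j) * z^(j+1))"
  using assms
proof (induction n rule: dec_induct)
  case (step n)
  have split: "{1..Suc n - 1} = insert n {1..n-1}" using step(1) by auto
  have "(1 - z) * (\<Sum>j=1..Suc n. f j * z^j)
      = (1 - z) * (\<Sum>j=1..n. f j * z^j) + (1 - z) * f (Suc n) * z^(Suc n)"
    by (simp add: algebra_simps)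
  also have "\<dots> = f 1 * z - f (Suc n) * z^(Suc n + 1)
      + ((f (n+1) - f n) * z^(n+1) + (\<Sum>j=1..n-1. (f (j+1) - f j) * z^(j+1)))"
    unfolding step.IH by (simp add: algebra_simps)
  also have "\<dots> = f 1 * z - f (Suc n) * z^(Suc n + 1) + (\<Sum>j=1..Suc n - 1. (f (j+1) - f j) * z^(j+1))"
    unfolding split using step(1) by simp
  finally show ?case .
qed (simp add: algebra_simps power2_eq_square)

lemma norm_sum_mult_power_le:
  fixes f :: "nat \<Rightarrow> 'a::real_normed_field"
  assumes "n \<ge> 1" "norm z = 1" "z \<noteq> 1" "\<forall>j\<ge>1. norm (f j) \<le> K"
  shows "norm (\<Sum>j=1..n. f j * z^j) \<le> (2*K + (\<Sum>j=1..n-1. norm (f (j+1) - f j))) / norm (1 - z)"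
proof -
  have "norm (1 - z) * norm (\<Sum>j=1..n. f j * z^j) = norm ((1 - z) * (\<Sum>j=1..n. f j * z^j))"
    by (rule norm_mult[symmetric])
  also have "\<dots> = norm (f 1 * z - f n * z^(n+1) + (\<Sum>j=1..n-1. (f (j+1) - f j) * z^(j+1)))"
    by (simp only: sum_mult_power_Abel[OF assms(1)])
  also have "\<dots> \<le> norm (f 1 * z) + norm (f n * z^(n+1)) + (\<Sum>j=1..n-1. norm ((f (j+1) - f j) * z^(j+1)))"
    by (rule order.trans[OF norm_triangle_ineq add_mono[OF norm_triangle_ineq4 norm_sum]])
  also have "\<dots> \<le> 2*K + (\<Sum>j=1..n-1. norm (f (j+1) - f j))"
    using assms(4)[rule_format, of 1] assms(4)[rule_format, of n] assms(1,2)
    by (simp add: norm_mult norm_power)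
  finally show ?thesis
    using assms(3) by (simp add: field_simps)
qed

definition weighted_exp_sum :: "nat set \<Rightarrow> (nat \<Rightarrow> real) \<Rightarrow> real \<Rightarrow> complex" where
  "weighted_exp_sum I w t = (\<Sum>i\<in>I. of_real (w i) * cis (real i * t))"

lemma weighted_exp_sum_over_n_tendsto_0:
  fixes w :: "nat \<Rightarrow> real"
  assumes bounded: "\<forall>j\<ge>1. \<bar>w j\<bar> \<le> K"
    and variation: "(\<lambda>n. \<Sum>j=1..n-1. \<bar>w (j+1) - w j\<bar>) \<in> o(\<lambda>n. real n)"
    and "cis t \<noteq> 1"
  shows "(\<lambda>n. cmod (weighted_exp_sum {1..n} w t) / real n) \<longlonglongrightarrow> 0"
proof (rule tendsto_sandwich[OF _ _ tendsto_const])
  define N where "N = cmod (1 - cis t)"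
  define V where "V n = (\<Sum>j=1..n-1. \<bar>w (j+1) - w j\<bar>)" for n
  show "\<forall>\<^sub>F n in sequentially. cmod (weighted_exp_sum {1..n} w t) / real n \<le> ((2*K + V n) / real n) / N"
  proof (rule eventually_sequentiallyI)
    fix n :: nat assume "n \<ge> 1"
    have "weighted_exp_sum {1..n} w t = (\<Sum>j=1..n. of_real (w j) * cis t ^ j)"
      by (simp only: weighted_exp_sum_def Complex.DeMoivre)
    also have "cmod \<dots> \<le> (2*K + V n) / N"
      using norm_sum_mult_power_le[OF \<open>n \<ge> 1\<close>, of "cis t" "\<lambda>j. of_real (w j)" K] bounded \<open>cis t \<noteq> 1\<close>
      by (simp add: N_def V_def flip: of_real_diff)
    finally have "cmod (weighted_exp_sum {1..n} w t) / real n \<le> (2*K + V n) / N / real n"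
      by (rule divide_right_mono) simp
    then show "cmod (weighted_exp_sum {1..n} w t) / real n \<le> ((2*K + V n) / real n) / N"
      by (simp add: ac_simps)
  qed
  have "(\<lambda>n. V n / real n) \<longlonglongrightarrow> 0"
    using smalloD_tendsto[OF variation] by (simp add: V_def)
  then show "(\<lambda>n. ((2*K + V n) / real n) / N) \<longlonglongrightarrow> 0"
    unfolding add_divide_distrib by (intro tendsto_divide_zero tendsto_add_zero lim_const_over_n)
qed simp

definition nonresonant :: "(nat \<Rightarrow> real) \<Rightarrow> nat set \<Rightarrow> bool" where
  "nonresonant \<omega> K \<longleftrightarrow> (\<forall>k\<in>K. \<forall>l\<in>K. cis (\<omega> k + \<omega> l) \<noteq> 1 \<and> (k \<noteq> l \<longrightarrow> cis (\<omega> k - \<omega> l) \<noteq> 1))"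

lemma nonresonant_if_exp_ne_1:
  assumes "\<forall>k\<in>K. exp (\<i> * complex_of_real (2 * \<omega> k)) \<noteq> 1"
    and "\<forall>k\<in>K. \<forall>l\<in>K. k \<noteq> l \<longrightarrow>
      exp (\<i> * complex_of_real (\<omega> k + \<omega> l)) \<noteq> 1 \<and> exp (\<i> * complex_of_real (\<omega> k - \<omega> l)) \<noteq> 1"
  shows "nonresonant \<omega> K"
  unfolding nonresonant_def
proof (intro ballI conjI impI)
  fix k l assume kl: "k \<in> K" "l \<in> K"
  show "cis (\<omega> k + \<omega> l) \<noteq> 1"
  proof (cases "k = l")
    case True
    then have "\<omega> k + \<omega> l = 2 * \<omega> k"
      by simp
    then show ?thesis
      using assms(1) kl unfolding cis_conv_exp by (simp only:) blast
  next
    case False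
    then show ?thesis
      using assms(2) kl unfolding cis_conv_exp by blast
  qed
  show "cis (\<omega> k - \<omega> l) \<noteq> 1" if "k \<noteq> l"
    using assms(2) kl that unfolding cis_conv_exp by blast
qed

definition cross_terms :: "nat set \<Rightarrow> (nat \<Rightarrow> real) \<Rightarrow> (nat \<Rightarrow> real) \<Rightarrow> nat set \<Rightarrow> real" where
  "cross_terms I w \<omega> K = (\<Sum>k\<in>K. \<Sum>l\<in>K. cmod (weighted_exp_sum I w (\<omega> k + \<omega> l))
      + (if k = l then 0 else cmod (weighted_exp_sum I w (\<omega> k - \<omega> l))))"

lemma cross_terms_over_n_tendsto_0:
  fixes w \<omega> :: "nat \<Rightarrow> real"
  assumes "finite K" "\<forall>j\<ge>1. \<bar>w j\<bar> \<le> B"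
    and "(\<lambda>n. \<Sum>j=1..n-1. \<bar>w (j+1) - w j\<bar>) \<in> o(\<lambda>n. real n)"
    and "nonresonant \<omega> K"
  shows "(\<lambda>n. cross_terms {1..n} w \<omega> K / real n) \<longlonglongrightarrow> 0"
proof -
  note decay = weighted_exp_sum_over_n_tendsto_0[OF assms(2,3)]
  have pair: "(\<lambda>n. (cmod (weighted_exp_sum {1..n} w (\<omega> k + \<omega> l))
      + (if k = l then 0 else cmod (weighted_exp_sum {1..n} w (\<omega> k - \<omega> l)))) / real n) \<longlonglongrightarrow> 0"
    if "k \<in> K" "l \<in> K" for k l
  proof -
    have plus: "cis (\<omega> k + \<omega> l) \<noteq> 1" and minus: "k \<noteq> l \<Longrightarrow> cis (\<omega> k - \<omega> l) \<noteq> 1"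
      using \<open>nonresonant \<omega> K\<close> that by (auto simp: nonresonant_def)
    show ?thesis
    proof (cases "k = l")
      case True
      then show ?thesis using decay[OF plus] by simp
    next
      case False
      then show ?thesis
        using tendsto_add_zero[OF decay[OF plus] decay[OF minus[OF False]]] by (simp add: add_divide_distrib)
    qed
  qed
  then show ?thesis
    unfolding cross_terms_def sum_divide_distrib by (auto intro!: tendsto_null_sum)
qed

lemma cross_terms_over_sum_tendsto_0:
  fixes w \<omega> :: "nat \<Rightarrow> real"
  assumes "finite K" "0 < c" and bounds: "\<forall>j\<ge>1. c \<le> w j \<and> w j \<le> B"
    and "(\<lambda>n. \<Sum>j=1..n-1. \<bar>w (j+1) - w j\<bar>) \<in> o(\<lambda>n. real n)"
    and "nonresonant \<omega> K"
  shows "(\<lambda>n. cross_terms {1..n} w \<omega> K / (\<Sum>i=1..n. w i)) \<longlonglongrightarrow> 0"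
proof (rule tendsto_sandwich[OF _ _ tendsto_const])
  have "\<forall>j\<ge>1. \<bar>w j\<bar> \<le> B" using bounds \<open>0 < c\<close> by fastforce
  then have "(\<lambda>n. cross_terms {1..n} w \<omega> K / real n) \<longlonglongrightarrow> 0"
    using assms by (intro cross_terms_over_n_tendsto_0) auto
  then show "(\<lambda>n. (cross_terms {1..n} w \<omega> K / real n) / c) \<longlonglongrightarrow> 0"
    by (rule tendsto_divide_zero)
  have cross_nonneg: "cross_terms I w \<omega> K \<ge> 0" for I
    unfolding cross_terms_def by (intro sum_nonneg) simp
  show "\<forall>\<^sub>F n in sequentially. cross_terms {1..n} w \<omega> K / (\<Sum>i=1..n. w i)
      \<le> (cross_terms {1..n} w \<omega> K / real n) / c"
  proof (rule eventually_sequentiallyI)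
    fix n :: nat assume "n \<ge> 1"
    then have pos: "0 < c * real n" using \<open>0 < c\<close> by simp
    have lower: "c * real n \<le> (\<Sum>i=1..n. w i)"
      using sum_mono[of "{1..n}" "\<lambda>_. c" w] bounds by (simp add: mult.commute)
    have "cross_terms {1..n} w \<omega> K / (\<Sum>i=1..n. w i) \<le> cross_terms {1..n} w \<omega> K / (c * real n)"
      by (rule divide_left_mono[OF lower cross_nonneg mult_pos_pos[OF order.strict_trans2[OF pos lower] pos]])
    then show "cross_terms {1..n} w \<omega> K / (\<Sum>i=1..n. w i) \<le> (cross_terms {1..n} w \<omega> K / real n) / c"
      by (simp add: mult.commute)
  qed
  show "\<forall>\<^sub>F n in sequentially. 0 \<le> cross_terms {1..n} w \<omega> K / (\<Sum>i=1..n. w i)"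
    using bounds \<open>0 < c\<close> cross_nonneg
    by (intro always_eventually allI divide_nonneg_nonneg sum_nonneg) force+
qed

lemma Re_mult_Re: "Re a * Re b = (Re (a * b) + Re (a * cnj b)) / 2"
  by (simp add: algebra_simps)

lemma weighted_sum_Re_cis_mult:
  "(\<Sum>i\<in>I. w i * (Re (cnj (cis (real i * a)) * y) * Re (cnj (cis (real i * b)) * z)))
   = (Re (cnj (weighted_exp_sum I w (a + b)) * (y * z))
      + Re (cnj (weighted_exp_sum I w (a - b)) * (y * cnj z))) / 2"
proof -
  have pointwise: "Re (cnj (cis (real i * a)) * y) * Re (cnj (cis (real i * b)) * z)
      = (Re (cnj (cis (real i * (a + b))) * (y * z)) + Re (cnj (cis (real i * (a - b))) * (y * cnj z))) / 2"
    for i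
    unfolding Re_mult_Re by (simp add: cis_cnj cis_mult algebra_simps)
  have linear: "Re (cnj (weighted_exp_sum I w t) * p) = (\<Sum>i\<in>I. w i * Re (cnj (cis (real i * t)) * p))"
    for t p
    unfolding weighted_exp_sum_def cnj_sum sum_distrib_right Re_sum
    by (intro sum.cong refl) (simp add: algebra_simps)
  have "(\<Sum>i\<in>I. w i * (Re (cnj (cis (real i * a)) * y) * Re (cnj (cis (real i * b)) * z)))
      = (\<Sum>i\<in>I. (w i * Re (cnj (cis (real i * (a + b))) * (y * z))
                  + w i * Re (cnj (cis (real i * (a - b))) * (y * cnj z))) / 2)"
    unfolding pointwise by (simp only: distrib_left times_divide_eq_right)
  then show ?thesis
    unfolding linear by (simp only: add_divide_distrib sum_divide_distrib sum.distrib)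
qed

lemma abs_Re_cnj_mult_le: "\<bar>Re (cnj s * p)\<bar> \<le> cmod s * cmod p"
  using abs_Re_le_cmod[of "cnj s * p"] by (simp add: norm_mult)

lemma weighted_sum_Re_cis_mult_le:
  "\<bar>\<Sum>i\<in>I. w i * (Re (cnj (cis (real i * a)) * y) * Re (cnj (cis (real i * b)) * z))\<bar>
    \<le> (cmod (weighted_exp_sum I w (a + b)) + cmod (weighted_exp_sum I w (a - b))) * (cmod y * cmod z) / 2"
  unfolding weighted_sum_Re_cis_mult
  using abs_Re_cnj_mult_le[of "weighted_exp_sum I w (a + b)" "y * z"]
    abs_Re_cnj_mult_le[of "weighted_exp_sum I w (a - b)" "y * cnj z"]
  by (simp add: norm_mult field_simps)

lemma weighted_sum_Re_cis_square_approx: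
  "\<bar>(\<Sum>i\<in>I. w i * (Re (cnj (cis (real i * a)) * y))\<^sup>2) - sum w I / 2 * (cmod y)\<^sup>2\<bar>
    \<le> cmod (weighted_exp_sum I w (a + a)) * (cmod y)\<^sup>2 / 2"
proof -
  have "y * cnj y = of_real ((cmod y)\<^sup>2)"
    by (rule complex_norm_square[symmetric])
  moreover have "cnj (weighted_exp_sum I w (a - a)) = of_real (sum w I)"
    by (simp add: weighted_exp_sum_def)
  ultimately have "Re (cnj (weighted_exp_sum I w (a - a)) * (y * cnj y)) = sum w I * (cmod y)\<^sup>2"
    by (simp del: of_real_power of_real_sum)
  moreover have "(\<Sum>i\<in>I. w i * (Re (cnj (cis (real i * a)) * y))\<^sup>2)
      = (Re (cnj (weighted_exp_sum I w (a + a)) * (y * y)) + Re (cnj (weighted_exp_sum I w (a - a)) * (y * cnj y))) / 2"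
    unfolding power2_eq_square by (rule weighted_sum_Re_cis_mult)
  moreover have "sum w I / 2 * (cmod y)\<^sup>2 = sum w I * (cmod y)\<^sup>2 / 2"
    by simp
  ultimately have diff: "(\<Sum>i\<in>I. w i * (Re (cnj (cis (real i * a)) * y))\<^sup>2) - sum w I / 2 * (cmod y)\<^sup>2
      = Re (cnj (weighted_exp_sum I w (a + a)) * (y * y)) / 2"
    by (simp only: add_divide_distrib add_diff_cancel_right')
  have "\<bar>Re (cnj (weighted_exp_sum I w (a + a)) * (y * y))\<bar> \<le> cmod (weighted_exp_sum I w (a + a)) * (cmod y)\<^sup>2"
    using abs_Re_cnj_mult_le[of "weighted_exp_sum I w (a + a)" "y * y"] by (simp add: norm_mult power2_eq_square)
  then show ?thesis
    unfolding diff by simp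
qed

lemma weighted_sum_square_Re_cis_approx:
  fixes w \<omega> :: "nat \<Rightarrow> real" and \<zeta> :: "nat \<Rightarrow> complex"
  assumes "finite K" and bound: "\<forall>k\<in>K. cmod (\<zeta> k) \<le> B"
  shows "\<bar>(\<Sum>i\<in>I. w i * (\<Sum>k\<in>K. Re (cnj (cis (real i * \<omega> k)) * \<zeta> k))\<^sup>2)
           - sum w I / 2 * (\<Sum>k\<in>K. (cmod (\<zeta> k))\<^sup>2)\<bar> \<le> B\<^sup>2 / 2 * cross_terms I w \<omega> K"
proof -
  define g where "g i k = Re (cnj (cis (real i * \<omega> k)) * \<zeta> k)" for i k
  define P where "P k l = (\<Sum>i\<in>I. w i * (g i k * g i l))" for k l
  define H where "H k l = (if k = l then sum w I / 2 * (cmod (\<zeta> k))\<^sup>2 else 0)" for k l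
  define T where "T k l = cmod (weighted_exp_sum I w (\<omega> k + \<omega> l))
      + (if k = l then 0 else cmod (weighted_exp_sum I w (\<omega> k - \<omega> l)))" for k l
  have square: "(\<Sum>i\<in>I. w i * (\<Sum>k\<in>K. g i k)\<^sup>2) = (\<Sum>k\<in>K. \<Sum>l\<in>K. P k l)"
  proof -
    have "(\<Sum>k\<in>K. g i k)\<^sup>2 = (\<Sum>k\<in>K. \<Sum>l\<in>K. g i k * g i l)" for i
      by (simp add: power2_eq_square sum_product)
    then show ?thesis
      unfolding P_def by (simp add: sum_distrib_left sum.swap[of _ I])
  qed
  have diagonal: "(\<Sum>k\<in>K. \<Sum>l\<in>K. H k l) = sum w I / 2 * (\<Sum>k\<in>K. (cmod (\<zeta> k))\<^sup>2)"
    using \<open>finite K\<close> by (simp add: H_def sum_distrib_left)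
  have pair: "\<bar>P k l - H k l\<bar> \<le> T k l * (cmod (\<zeta> k) * cmod (\<zeta> l)) / 2" for k l
  proof (cases "k = l")
    case True
    then show ?thesis
      using weighted_sum_Re_cis_square_approx[where I = I and w = w and a = "\<omega> l" and y = "\<zeta> l"]
      by (simp add: P_def H_def T_def g_def power2_eq_square)
  next
    case False
    then show ?thesis
      using weighted_sum_Re_cis_mult_le[where I = I and w = w and a = "\<omega> k" and y = "\<zeta> k" and b = "\<omega> l" and z = "\<zeta> l"]
      by (simp add: P_def H_def T_def g_def)
  qed
  have "\<bar>(\<Sum>k\<in>K. \<Sum>l\<in>K. P k l) - (\<Sum>k\<in>K. \<Sum>l\<in>K. H k l)\<bar> \<le> (\<Sum>k\<in>K. \<Sum>l\<in>K. \<bar>P k l - H k l\<bar>)"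
    by (simp only: sum_subtractf[symmetric]) (intro order.trans[OF sum_abs] sum_mono sum_abs)
  also have "\<dots> \<le> (\<Sum>k\<in>K. \<Sum>l\<in>K. T k l * B\<^sup>2 / 2)"
  proof (intro sum_mono order.trans[OF pair] divide_right_mono mult_left_mono)
    fix k l assume "k \<in> K" "l \<in> K"
    then show "cmod (\<zeta> k) * cmod (\<zeta> l) \<le> B\<^sup>2"
      using bound by (simp add: power2_eq_square mult_mono')
    show "T k l \<ge> 0" by (simp add: T_def)
  qed simp
  also have "\<dots> = B\<^sup>2 / 2 * cross_terms I w \<omega> K"
    by (simp add: cross_terms_def T_def sum_distrib_left sum_divide_distrib add_divide_distrib algebra_simps)
  finally show ?thesis
    unfolding square[unfolded g_def, symmetric] diagonal by (simp only: g_def)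
qed

lemma spec_norm_between:
  fixes A :: "nat \<Rightarrow> nat \<Rightarrow> real"
  assumes upper: "\<And>x. (\<Sum>j=1..d. (x j)\<^sup>2) = 1 \<Longrightarrow> (\<Sum>i=1..n. (\<Sum>j=1..d. A i j * x j)\<^sup>2) \<le> U"
    and unit: "(\<Sum>j=1..d. (x0 j)\<^sup>2) = 1"
    and lower: "L \<le> (\<Sum>i=1..n. (\<Sum>j=1..d. A i j * x0 j)\<^sup>2)"
  shows "sqrt L \<le> spec_norm n d A \<and> spec_norm n d A \<le> sqrt U"
proof -
  define T where "T = {sqrt (\<Sum>i=1..n. (\<Sum>j=1..d. A i j * x j)\<^sup>2) | x. (\<Sum>j=1..d. (x j)\<^sup>2) = 1}"
  have x0: "sqrt (\<Sum>i=1..n. (\<Sum>j=1..d. A i j * x0 j)\<^sup>2) \<in> T"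
    unfolding T_def using unit by blast
  have T_le: "\<forall>t\<in>T. t \<le> sqrt U"
    unfolding T_def using upper by (auto intro: real_sqrt_le_mono)
  then have "bdd_above T" by (auto simp: bdd_above_def)
  then have "sqrt L \<le> Sup T"
    using cSup_upper[OF x0] lower real_sqrt_le_mono order_trans by blast
  moreover have "Sup T \<le> sqrt U"
    using x0 T_le by (intro cSup_least) auto
  ultimately show ?thesis
    by (simp add: spec_norm_def T_def)
qed

lemma spec_norm_rank_one:
  assumes unit: "(\<Sum>j=1..d. (v j)\<^sup>2) = 1"
  shows "spec_norm n d (\<lambda>i j. u i * v j) = sqrt (\<Sum>i=1..n. (u i)\<^sup>2)"
proof -
  have quad: "(\<Sum>i=1..n. (\<Sum>j=1..d. u i * v j * x j)\<^sup>2) = (\<Sum>i=1..n. (u i)\<^sup>2) * (\<Sum>j=1..d. v j * x j)\<^sup>2"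
    for x
    by (simp add: sum_distrib_left sum_distrib_right power_mult_distrib mult.assoc flip: sum_distrib_left)
  have "(\<Sum>j=1..d. v j * x j)\<^sup>2 \<le> 1" if "(\<Sum>j=1..d. (x j)\<^sup>2) = 1" for x
    using Cauchy_Schwarz_ineq_sum[of v x "{1..d}"] that unit by simp
  then have "(\<Sum>i=1..n. (\<Sum>j=1..d. u i * v j * x j)\<^sup>2) \<le> (\<Sum>i=1..n. (u i)\<^sup>2)"
    if "(\<Sum>j=1..d. (x j)\<^sup>2) = 1" for x
    unfolding quad using that by (simp add: mult_left_le sum_nonneg)
  moreover have "(\<Sum>i=1..n. (u i)\<^sup>2) \<le> (\<Sum>i=1..n. (\<Sum>j=1..d. u i * v j * v j)\<^sup>2)"
    unfolding quad using unit by (simp add: power2_eq_square)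
  ultimately show ?thesis
    using spec_norm_between[OF _ unit] by (meson order_antisym)
qed

lemma spec_norm_over_sqrt_tendsto:
  fixes A :: "nat \<Rightarrow> nat \<Rightarrow> nat \<Rightarrow> real" and q :: "(nat \<Rightarrow> real) \<Rightarrow> real" and S err :: "nat \<Rightarrow> real"
  assumes approx: "\<And>n x. (\<Sum>j=1..d. (x j)\<^sup>2) = 1 \<Longrightarrow>
      \<bar>(\<Sum>i=1..n. (\<Sum>j=1..d. A n i j * x j)\<^sup>2) - S n * q x\<bar> \<le> err n"
    and q_le: "\<And>x. (\<Sum>j=1..d. (x j)\<^sup>2) = 1 \<Longrightarrow> q x \<le> L"
    and x0: "(\<Sum>j=1..d. (x0 j)\<^sup>2) = 1" "q x0 = L"
    and S_pos: "\<forall>\<^sub>F n in sequentially. S n > 0"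
    and err: "(\<lambda>n. err n / S n) \<longlonglongrightarrow> 0"
  shows "(\<lambda>n. spec_norm n d (A n) / sqrt (S n)) \<longlonglongrightarrow> sqrt L"
proof (rule tendsto_sandwich)
  have between: "sqrt (L - err n / S n) \<le> spec_norm n d (A n) / sqrt (S n)
      \<and> spec_norm n d (A n) / sqrt (S n) \<le> sqrt (L + err n / S n)" if "S n > 0" for n
  proof -
    have "sqrt (S n * L - err n) \<le> spec_norm n d (A n) \<and> spec_norm n d (A n) \<le> sqrt (S n * L + err n)"
    proof (rule spec_norm_between[OF _ x0(1)])
      fix x :: "nat \<Rightarrow> real" assume unit: "(\<Sum>j=1..d. (x j)\<^sup>2) = 1"
      have "S n * q x \<le> S n * L"
        using q_le[OF unit] that by (simp add: mult_left_mono)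
      then show "(\<Sum>i=1..n. (\<Sum>j=1..d. A n i j * x j)\<^sup>2) \<le> S n * L + err n"
        using approx[OF unit, of n] by linarith
    next
      show "S n * L - err n \<le> (\<Sum>i=1..n. (\<Sum>j=1..d. A n i j * x0 j)\<^sup>2)"
        using approx[OF x0(1), of n] unfolding x0(2)[symmetric] by linarith
    qed
    moreover have "S n * L - err n = S n * (L - err n / S n)" "S n * L + err n = S n * (L + err n / S n)"
      using that by (simp_all add: field_simps)
    ultimately show ?thesis
      using that by (simp add: real_sqrt_mult pos_le_divide_eq pos_divide_le_eq mult.commute)
  qed
  show "\<forall>\<^sub>F n in sequentially. sqrt (L - err n / S n) \<le> spec_norm n d (A n) / sqrt (S n)"
    using S_pos by (rule eventually_mono) (use between in blast)
  show "\<forall>\<^sub>F n in sequentially. spec_norm n d (A n) / sqrt (S n) \<le> sqrt (L + err n / S n)"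
    using S_pos by (rule eventually_mono) (use between in blast)
  show "(\<lambda>n. sqrt (L - err n / S n)) \<longlonglongrightarrow> sqrt L"
    using tendsto_real_sqrt[OF tendsto_diff[OF tendsto_const err]] by simp
  show "(\<lambda>n. sqrt (L + err n / S n)) \<longlonglongrightarrow> sqrt L"
    using tendsto_real_sqrt[OF tendsto_add[OF tendsto_const err]] by simp
qed

text \<open>In this encoding the rotation block R_(j,theta_k) is multiplication by cis (j theta_k), and
  the Euclidean inner product of two planes a, b is Re (cnj a * b).\<close>

definition plane_complex :: "(nat \<Rightarrow> real) \<Rightarrow> nat \<Rightarrow> complex" where
  "plane_complex x k = Complex (x (2*k - 1)) (x (2*k))"

lemma norm_plane_complex: "cmod (plane_complex v k) = plane_norm v k"
  by (simp add: plane_complex_def plane_norm_def cmod_def)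

lemma plane_complex_scale: "plane_complex (\<lambda>j. a * x j) k = of_real a * plane_complex x k"
  by (simp add: plane_complex_def complex_eq_iff)

lemma sum_mult_plane_complex:
  "(\<Sum>j=1..2*m. x j * y j) = (\<Sum>k=1..m. Re (cnj (plane_complex x k) * plane_complex y k))"
  unfolding sum_double_pairs by (simp add: plane_complex_def)

lemma sum_squares_plane_complex:
  "(\<Sum>j=1..2*m. (x j)\<^sup>2) = (\<Sum>k=1..m. (cmod (plane_complex x k))\<^sup>2)"
  unfolding sum_double_pairs by (simp add: plane_complex_def cmod_power2)

lemma plane_complex_rope:
  assumes "k \<ge> 1"
  shows "plane_complex (rope \<theta> d X i) k = cis (real i * rope_freq \<theta> d k) * plane_complex (X i) k"
proof -
  have "odd (2*k - 1)" "(2*k - 1 + 1) div 2 = k" "2*k - 1 + 1 = 2*k" "(2*k + 1) div 2 = k"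
    using assms by auto
  then show ?thesis
    by (simp add: plane_complex_def rope_def Let_def complex_eq_iff)
qed

lemma rope_rank_one_row:
  assumes "d = 2*m"
  shows "(\<Sum>j=1..d. rope \<theta> d (\<lambda>i j. u i * v j) i j * x j)
    = u i * (\<Sum>k=1..m. Re (cnj (cis (real i * rope_freq \<theta> d k)) * (cnj (plane_complex v k) * plane_complex x k)))"
proof -
  have "(\<Sum>j=1..d. rope \<theta> d (\<lambda>i j. u i * v j) i j * x j)
      = (\<Sum>k=1..m. Re (cnj (plane_complex (rope \<theta> d (\<lambda>i j. u i * v j) i) k) * plane_complex x k))"
    unfolding assms by (rule sum_mult_plane_complex)
  also have "\<dots> = (\<Sum>k=1..m. u i * Re (cnj (cis (real i * rope_freq \<theta> d k)) * (cnj (plane_complex v k) * plane_complex x k)))"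
    by (intro sum.cong refl) (simp add: plane_complex_rope plane_complex_scale algebra_simps)
  finally show ?thesis
    by (simp add: sum_distrib_left)
qed

lemma Max_bounds_of_sum_squares:
  fixes a :: "'a \<Rightarrow> real"
  assumes "finite K" "K \<noteq> {}" "\<forall>k\<in>K. a k \<ge> 0" and sum_one: "(\<Sum>k\<in>K. (a k)\<^sup>2) = 1"
  shows "sqrt (1 / card K) \<le> Max (a ` K) \<and> Max (a ` K) \<le> 1"
proof -
  define M where "M = Max (a ` K)"
  have le_M: "a k \<le> M" if "k \<in> K" for k
    using assms that by (simp add: M_def)
  have "M \<in> a ` K"
    unfolding M_def using assms by (intro Max_in) auto
  then obtain k0 where k0: "k0 \<in> K" "a k0 = M"
    by auto
  then have "M \<ge> 0" using assms by auto
  have "M\<^sup>2 \<le> 1"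
    using member_le_sum[of k0 K "\<lambda>k. (a k)\<^sup>2"] k0 assms by simp
  then have "M \<le> 1"
    using \<open>M \<ge> 0\<close> by (simp add: power_le_one_iff)
  have "1 \<le> (\<Sum>k\<in>K. M\<^sup>2)"
    unfolding sum_one[symmetric] using assms le_M by (intro sum_mono power_mono) auto
  moreover have "card K > 0"
    using assms by (simp add: card_gt_0_iff)
  ultimately have "1 / card K \<le> M\<^sup>2"
    by (simp add: divide_le_eq mult.commute)
  then have "sqrt (1 / card K) \<le> M"
    by (rule real_le_lsqrt[OF \<open>M \<ge> 0\<close>])
  with \<open>M \<le> 1\<close> show ?thesis
    by (simp add: M_def)
qed

lemma plane_norm_nonneg: "plane_norm v k \<ge> 0"
  by (simp add: plane_norm_def)

lemma sum_plane_weighted_le: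
  assumes "d = 2*m" and le_M: "\<forall>k\<in>{1..m}. plane_norm v k \<le> M" and unit: "(\<Sum>j=1..d. (x j)\<^sup>2) = 1"
  shows "(\<Sum>k=1..m. (plane_norm v k * cmod (plane_complex x k))\<^sup>2) \<le> M\<^sup>2"
proof -
  have "(\<Sum>k=1..m. (plane_norm v k * cmod (plane_complex x k))\<^sup>2) \<le> (\<Sum>k=1..m. M\<^sup>2 * (cmod (plane_complex x k))\<^sup>2)"
    using le_M by (intro sum_mono) (simp add: power_mult_distrib mult_right_mono power_mono plane_norm_nonneg)
  also have "\<dots> = M\<^sup>2"
    using unit sum_squares_plane_complex[where m = m and x = x] assms(1) by (simp flip: sum_distrib_left)
  finally show ?thesis .
qed

lemma sum_plane_weighted_basis_vector:
  assumes "d = 2*m" "k0 \<in> {1..m}"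
  defines "e \<equiv> \<lambda>j. if j = 2*k0 - 1 then 1 else 0 :: real"
  shows "(\<Sum>j=1..d. (e j)\<^sup>2) = 1"
    and "(\<Sum>k=1..m. (plane_norm v k * cmod (plane_complex e k))\<^sup>2) = (plane_norm v k0)\<^sup>2"
proof -
  have "(e j)\<^sup>2 = (if j = 2*k0 - 1 then 1 else 0)" for j
    by (simp add: e_def)
  moreover have "2*k0 - 1 \<in> {1..d}" using assms by auto
  ultimately show "(\<Sum>j=1..d. (e j)\<^sup>2) = 1"
    by simp
  have "plane_complex e k = (if k = k0 then 1 else 0)" if "k \<ge> 1" for k
    using that assms(2) by (auto simp: e_def plane_complex_def complex_eq_iff)
  then have "(\<Sum>k=1..m. (plane_norm v k * cmod (plane_complex e k))\<^sup>2)
      = (\<Sum>k=1..m. if k = k0 then (plane_norm v k)\<^sup>2 else 0)"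
    by (intro sum.cong) auto
  also have "\<dots> = (plane_norm v k0)\<^sup>2"
    using assms(2) by simp
  finally show "(\<Sum>k=1..m. (plane_norm v k * cmod (plane_complex e k))\<^sup>2) = (plane_norm v k0)\<^sup>2" .
qed

lemma rope_rank_one_quadratic_form_approx:
  fixes u v x :: "nat \<Rightarrow> real"
  assumes "d = 2*m" and le_M: "\<forall>k\<in>{1..m}. plane_norm v k \<le> M" and unit: "(\<Sum>j=1..d. (x j)\<^sup>2) = 1"
  shows "\<bar>(\<Sum>i=1..n. (\<Sum>j=1..d. rope \<theta> d (\<lambda>i j. u i * v j) i j * x j)\<^sup>2)
           - (\<Sum>i=1..n. (u i)\<^sup>2) * ((\<Sum>k=1..m. (plane_norm v k * cmod (plane_complex x k))\<^sup>2) / 2)\<bar>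
         \<le> M\<^sup>2 / 2 * cross_terms {1..n} (\<lambda>i. (u i)\<^sup>2) (rope_freq \<theta> d) {1..m}"
proof -
  define \<zeta> where "\<zeta> k = cnj (plane_complex v k) * plane_complex x k" for k
  have norm_\<zeta>: "cmod (\<zeta> k) = plane_norm v k * cmod (plane_complex x k)" for k
    by (simp add: \<zeta>_def norm_mult norm_plane_complex)
  have "cmod (\<zeta> k) \<le> M" if "k \<in> {1..m}" for k
  proof -
    have "(cmod (plane_complex x k))\<^sup>2 \<le> 1"
      using member_le_sum[of k "{1..m}" "\<lambda>k. (cmod (plane_complex x k))\<^sup>2"] that unit
        sum_squares_plane_complex[where m = m and x = x] assms(1) by simp
    then have "cmod (plane_complex x k) \<le> 1"
      by (simp add: abs_square_le_1)
    moreover have "plane_norm v k \<le> M"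
      using le_M that by simp
    ultimately show ?thesis
      unfolding norm_\<zeta> using mult_left_le[OF _ plane_norm_nonneg] by (meson order_trans)
  qed
  then have "\<bar>(\<Sum>i=1..n. (u i)\<^sup>2 * (\<Sum>k=1..m. Re (cnj (cis (real i * rope_freq \<theta> d k)) * \<zeta> k))\<^sup>2)
      - (\<Sum>i=1..n. (u i)\<^sup>2) / 2 * (\<Sum>k=1..m. (cmod (\<zeta> k))\<^sup>2)\<bar>
      \<le> M\<^sup>2 / 2 * cross_terms {1..n} (\<lambda>i. (u i)\<^sup>2) (rope_freq \<theta> d) {1..m}"
    by (intro weighted_sum_square_Re_cis_approx) auto
  moreover have "(\<Sum>i=1..n. (\<Sum>j=1..d. rope \<theta> d (\<lambda>i j. u i * v j) i j * x j)\<^sup>2)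
      = (\<Sum>i=1..n. (u i)\<^sup>2 * (\<Sum>k=1..m. Re (cnj (cis (real i * rope_freq \<theta> d k)) * \<zeta> k))\<^sup>2)"
    by (simp only: rope_rank_one_row[OF assms(1)] \<zeta>_def power_mult_distrib)
  moreover have "(\<Sum>i=1..n. (u i)\<^sup>2) / 2 * (\<Sum>k=1..m. (cmod (\<zeta> k))\<^sup>2)
      = (\<Sum>i=1..n. (u i)\<^sup>2) * ((\<Sum>k=1..m. (plane_norm v k * cmod (plane_complex x k))\<^sup>2) / 2)"
    by (simp add: norm_\<zeta>)
  ultimately show ?thesis
    by (simp only:)
qed

lemma rope_rank_one_spec_norm_tendsto:
  fixes u v :: "nat \<Rightarrow> real"
  assumes d: "d = 2*m" "m \<ge> 1" and "0 < c" and u_bounds: "\<forall>j\<ge>1. c \<le> \<bar>u j\<bar> \<and> \<bar>u j\<bar> \<le> C"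
    and variation: "(\<lambda>n. \<Sum>j=1..n-1. \<bar>(u (j+1))\<^sup>2 - (u j)\<^sup>2\<bar>) \<in> o(\<lambda>n. real n)"
    and nonresonant: "nonresonant (rope_freq \<theta> d) {1..m}"
  shows "(\<lambda>n. spec_norm n d (rope \<theta> d (\<lambda>i j. u i * v j)) / sqrt (\<Sum>i=1..n. (u i)\<^sup>2))
    \<longlonglongrightarrow> Max (plane_norm v ` {1..m}) / sqrt 2"
proof -
  define M where "M = Max (plane_norm v ` {1..m})"
  have le_M: "\<forall>k\<in>{1..m}. plane_norm v k \<le> M"
    by (simp add: M_def)
  have "M \<in> plane_norm v ` {1..m}"
    unfolding M_def using d by (intro Max_in) auto
  then obtain k0 where k0: "k0 \<in> {1..m}" "plane_norm v k0 = M"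
    by auto
  have u_sq: "\<forall>j\<ge>1. c\<^sup>2 \<le> (u j)\<^sup>2 \<and> (u j)\<^sup>2 \<le> C\<^sup>2"
  proof (intro allI impI)
    fix j :: nat assume "j \<ge> 1"
    then have c_le: "c \<le> \<bar>u j\<bar>" and le_C: "\<bar>u j\<bar> \<le> C" using u_bounds by auto
    have "c\<^sup>2 \<le> \<bar>u j\<bar>\<^sup>2" by (rule power_mono[OF c_le]) (use \<open>0 < c\<close> in simp)
    moreover have "\<bar>u j\<bar>\<^sup>2 \<le> C\<^sup>2" by (rule power_mono[OF le_C]) simp
    ultimately show "c\<^sup>2 \<le> (u j)\<^sup>2 \<and> (u j)\<^sup>2 \<le> C\<^sup>2" by simp
  qed
  have "(\<lambda>n. cross_terms {1..n} (\<lambda>i. (u i)\<^sup>2) (rope_freq \<theta> d) {1..m} / (\<Sum>i=1..n. (u i)\<^sup>2)) \<longlonglongrightarrow> 0"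
    by (rule cross_terms_over_sum_tendsto_0[OF _ _ u_sq variation nonresonant]) (use \<open>0 < c\<close> in auto)
  from tendsto_mult[OF tendsto_const[of "M\<^sup>2 / 2"] this]
  have err: "(\<lambda>n. M\<^sup>2 / 2 * cross_terms {1..n} (\<lambda>i. (u i)\<^sup>2) (rope_freq \<theta> d) {1..m} / (\<Sum>i=1..n. (u i)\<^sup>2)) \<longlonglongrightarrow> 0"
    by simp
  have S_pos: "\<forall>\<^sub>F n in sequentially. (\<Sum>i=1..n. (u i)\<^sup>2) > 0"
  proof (rule eventually_sequentiallyI)
    fix n :: nat assume "n \<ge> 1"
    have "c \<le> \<bar>u 1\<bar>" using u_bounds by simp
    then have "0 < (u 1)\<^sup>2" using \<open>0 < c\<close> by simp
    also have "\<dots> \<le> (\<Sum>i=1..n. (u i)\<^sup>2)" using \<open>n \<ge> 1\<close> by (intro member_le_sum) auto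
    finally show "(\<Sum>i=1..n. (u i)\<^sup>2) > 0" .
  qed
  note basis = sum_plane_weighted_basis_vector[OF d(1) k0(1)]
  have q_le: "(\<Sum>k=1..m. (plane_norm v k * cmod (plane_complex x k))\<^sup>2) / 2 \<le> M\<^sup>2 / 2"
    if "(\<Sum>j=1..d. (x j)\<^sup>2) = 1" for x
    using sum_plane_weighted_le[OF d(1) le_M that] by simp
  have q_basis: "(\<Sum>k=1..m. (plane_norm v k * cmod (plane_complex (\<lambda>j. if j = 2*k0 - 1 then 1 else 0) k))\<^sup>2) / 2
      = M\<^sup>2 / 2"
    using basis(2)[of v] k0(2) by simp
  have "(\<lambda>n. spec_norm n d (rope \<theta> d (\<lambda>i j. u i * v j)) / sqrt (\<Sum>i=1..n. (u i)\<^sup>2)) \<longlonglongrightarrow> sqrt (M\<^sup>2 / 2)"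
    using rope_rank_one_quadratic_form_approx[OF d(1) le_M] q_le basis(1) q_basis S_pos err
    by (rule spec_norm_over_sqrt_tendsto[where A = "\<lambda>_. rope \<theta> d (\<lambda>i j. u i * v j)"
          and S = "\<lambda>n. \<Sum>i=1..n. (u i)\<^sup>2"
          and q = "\<lambda>x. (\<Sum>k=1..m. (plane_norm v k * cmod (plane_complex x k))\<^sup>2) / 2"
          and err = "\<lambda>n. M\<^sup>2 / 2 * cross_terms {1..n} (\<lambda>i. (u i)\<^sup>2) (rope_freq \<theta> d) {1..m}"])
  moreover have "sqrt (M\<^sup>2 / 2) = M / sqrt 2"
    using k0(2) plane_norm_nonneg[of v k0] by (simp add: real_sqrt_divide)
  ultimately show ?thesis
    by (simp add: M_def)
qed

theorem lemma1:
  fixes d :: nat and \<theta> :: real and u :: "nat \<Rightarrow> real" and v :: "nat \<Rightarrow> real"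
    and c C :: real
  assumes "even d" and "d \<ge> 2" and "\<theta> > 1"
    and "(\<Sum>j=1..d. (v j)\<^sup>2) = 1"
    and "0 < c" and "c \<le> C" and "\<forall>j\<ge>1. c \<le> \<bar>u j\<bar> \<and> \<bar>u j\<bar> \<le> C"
    and "(\<lambda>n. \<Sum>j=1..n-1. \<bar>(u (j+1))\<^sup>2 - (u j)\<^sup>2\<bar>) \<in> o(\<lambda>n. real n)"
    and "\<forall>k\<in>{1..d div 2}. exp (\<i> * complex_of_real (2 * rope_freq \<theta> d k)) \<noteq> 1"
    and "\<forall>k\<in>{1..d div 2}. \<forall>l\<in>{1..d div 2}. k \<noteq> l \<longrightarrow>
           exp (\<i> * complex_of_real (rope_freq \<theta> d k + rope_freq \<theta> d l)) \<noteq> 1 \<and>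
           exp (\<i> * complex_of_real (rope_freq \<theta> d k - rope_freq \<theta> d l)) \<noteq> 1"
  shows "((\<lambda>n. spec_norm n d (rope \<theta> d (\<lambda>i j. u i * v j)) / spec_norm n d (\<lambda>i j. u i * v j)
              - (1 / sqrt 2) * Max (plane_norm v ` {1..d div 2})) \<longlonglongrightarrow> 0) \<and>
         sqrt (2 / real d) \<le> Max (plane_norm v ` {1..d div 2}) \<and>
         Max (plane_norm v ` {1..d div 2}) \<le> 1"
proof -
  obtain m where d: "d = 2*m"
    using \<open>even d\<close> by blast
  have m: "m \<ge> 1" "d div 2 = m"
    using d \<open>d \<ge> 2\<close> by auto
  have nonresonant: "nonresonant (rope_freq \<theta> d) {1..m}"
    using assms(9,10) unfolding m(2) by (rule nonresonant_if_exp_ne_1)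
  have "(\<lambda>n. spec_norm n d (rope \<theta> d (\<lambda>i j. u i * v j)) / spec_norm n d (\<lambda>i j. u i * v j))
      \<longlonglongrightarrow> Max (plane_norm v ` {1..m}) / sqrt 2"
    using rope_rank_one_spec_norm_tendsto[OF d m(1) assms(5,7,8) nonresonant]
    by (simp only: spec_norm_rank_one[OF assms(4)])
  then have limit: "(\<lambda>n. spec_norm n d (rope \<theta> d (\<lambda>i j. u i * v j)) / spec_norm n d (\<lambda>i j. u i * v j)
      - (1 / sqrt 2) * Max (plane_norm v ` {1..m})) \<longlonglongrightarrow> 0"
    by (intro LIM_zero) simp
  have "(\<Sum>k=1..m. (plane_norm v k)\<^sup>2) = 1"
    using assms(4) sum_squares_plane_complex[where m = m and x = v] d by (simp add: norm_plane_complex)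
  then have bounds: "sqrt (1 / card {1..m}) \<le> Max (plane_norm v ` {1..m}) \<and> Max (plane_norm v ` {1..m}) \<le> 1"
    using m(1) by (intro Max_bounds_of_sum_squares) (auto simp: plane_norm_nonneg)
  have sqrt_eq: "sqrt (2 / real d) = sqrt (1 / card {1..m})"
    using d by simp
  show ?thesis
    unfolding m(2) sqrt_eq using limit bounds by blast
qed

end
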